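(* Let $N\ge1$, $n\ge k\ge 0$ be integers, let $T^{(g)}[1]>T^{(g)}[2]>\dots>T^{(g)}[L]$ be nonnegative integers, and let $k^{\mathrm{con}}[1],\dots,k^{\mathrm{con}}[L]$ be nonnegative integers. Suppose $$k\le n-nN\,\frac{1-\sum_{\ell=1}^{j-1}\frac{k^{\mathrm{con}}[\ell]}{n}}{T^{(g)}[j]+1}\quad\text{for all }j\in\{1,\dots,L\},\qquad k\le\sum_{\ell=1}^{L}k^{\mathrm{con}}[\ell].$$ Then there exists an $(n,k,\mathbf{T})_{\mathbb{F}}$ point-to-point code (over some finite field $\mathbb{F}$) achieving its delay spectrum $\mathbf{T}$ under $N$ erasures, where every entry of $\mathbf{T}$ lies in $\{T^{(g)}[1],\dots,T^{(g)}[L]\}$ and, for each $j$, at most $k^{\mathrm{con}}[j]$ entries of $\mathbf{T}$ equal $T^{(g)}[j]$.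
   Context: An $(n,k,\mathbf{T})_{\mathbb{F}}$ point-to-point code with delay spectrum $\mathbf{T}=[T[1],\dots,T[k]]$ (nonnegative integers) consists of source messages $s_t\in\mathbb{F}^k$, $t\ge0$; an encoder producing at each time $t$ a packet $x_t\in\mathbb{F}^n$ as a fixed function of $s_0,\dots,s_t$; and, for each $j$, a decoder which at time $t+T[j]$ outputs an estimate of $s_t[j]$ from received packets $y_0,\dots,y_{t+T[j]}$, where $y_u=x_u$ if time $u$ is not erased and $y_u=*$ otherwise. The code achieves delay spectrum $\mathbf{T}$ under $N$ erasures if for every erasure pattern with exactly $N$ erased times, every message sequence, every $t$ and $j$, the estimate of $s_t[j]$ is correct. *)

theory Defs
  imports Complex_Main "HOL-Algebra.Ring"
begin

text \<open>A source message s_t in F^k is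
represented by s t :: nat => 'a, with components s t j for j in {1..k} (1-based as in the paper).
A packet x_t in F^n is a function nat => 'a with meaningful components i in {1..n}.
A received packet is an option: None is the erasure symbol *, Some x is an unerased packet.
The delay spectrum T is indexed 1..k.\<close>

definition msg_agree :: "nat \<Rightarrow> nat \<Rightarrow> (nat \<Rightarrow> nat \<Rightarrow> 'a) \<Rightarrow> (nat \<Rightarrow> nat \<Rightarrow> 'a) \<Rightarrow> bool" where
  "msg_agree k t s s' \<longleftrightarrow> (\<forall>u\<le>t. \<forall>j\<in>{1..k}. s u j = s' u j)"

definition rcv_agree :: "nat \<Rightarrow> nat \<Rightarrow> (nat \<Rightarrow> (nat \<Rightarrow> 'a) option) \<Rightarrow> (nat \<Rightarrow> (nat \<Rightarrow> 'a) option) \<Rightarrow> bool" where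
  "rcv_agree n m y y' \<longleftrightarrow> (\<forall>u\<le>m. (y u = None \<longleftrightarrow> y' u = None) \<and>
      (\<forall>a b. y u = Some a \<longrightarrow> y' u = Some b \<longrightarrow> (\<forall>i\<in>{1..n}. a i = b i)))"

definition received :: "(nat \<Rightarrow> (nat \<Rightarrow> nat \<Rightarrow> 'a) \<Rightarrow> (nat \<Rightarrow> 'a)) \<Rightarrow> (nat \<Rightarrow> nat \<Rightarrow> 'a) \<Rightarrow> nat set \<Rightarrow> nat \<Rightarrow> (nat \<Rightarrow> 'a) option" where
  "received enc s E u = (if u \<in> E then None else Some (enc u s))"

text \<open>An (n,k,T)_F point-to-point code over the symbol set F (carrier of the field):
encoder enc t (a function of s_0..s_t, with values in F^n) and decoders dec j t
(decoder j at time t + T j, a function of y_0..y_{t+T j}).\<close>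
definition is_p2p_code ::
  "'a set \<Rightarrow> nat \<Rightarrow> nat \<Rightarrow> (nat \<Rightarrow> nat) \<Rightarrow> (nat \<Rightarrow> (nat \<Rightarrow> nat \<Rightarrow> 'a) \<Rightarrow> (nat \<Rightarrow> 'a))
   \<Rightarrow> (nat \<Rightarrow> nat \<Rightarrow> (nat \<Rightarrow> (nat \<Rightarrow> 'a) option) \<Rightarrow> 'a) \<Rightarrow> bool" where
  "is_p2p_code F n k T enc dec \<longleftrightarrow>
     (\<forall>t s. (\<forall>u j. j \<in> {1..k} \<longrightarrow> s u j \<in> F) \<longrightarrow> (\<forall>i\<in>{1..n}. enc t s i \<in> F)) \<and>
     (\<forall>t s s'. msg_agree k t s s' \<longrightarrow> (\<forall>i\<in>{1..n}. enc t s i = enc t s' i)) \<and>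
     (\<forall>j\<in>{1..k}. \<forall>t y y'. rcv_agree n (t + T j) y y' \<longrightarrow> dec j t y = dec j t y')"

definition achieves_spectrum ::
  "'a set \<Rightarrow> nat \<Rightarrow> nat \<Rightarrow> (nat \<Rightarrow> nat) \<Rightarrow> nat \<Rightarrow> (nat \<Rightarrow> (nat \<Rightarrow> nat \<Rightarrow> 'a) \<Rightarrow> (nat \<Rightarrow> 'a))
   \<Rightarrow> (nat \<Rightarrow> nat \<Rightarrow> (nat \<Rightarrow> (nat \<Rightarrow> 'a) option) \<Rightarrow> 'a) \<Rightarrow> bool" where
  "achieves_spectrum F n k T N enc dec \<longleftrightarrow>
     (\<forall>E s t j. finite E \<longrightarrow> card E = N \<longrightarrow> (\<forall>u j'. j' \<in> {1..k} \<longrightarrow> s u j' \<in> F) \<longrightarrow> j \<in> {1..k} \<longrightarrow>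
        dec j t (received enc s E) = s t j)"

end

theory Submission
  imports Defs "HOL-Number_Theory.Cong" "HOL-Computational_Algebra.Polynomial"
begin

text \<open>The parity symbols interleave, along diagonals, a systematic Reed--Solomon code of
length \<open>T1 + 1\<close> and dimension \<open>T1 + 1 - N\<close> over \<open>GF(p)\<close>, where \<open>T1\<close> is the largest delay.
Codeword \<open>q\<close> occupies the times \<open>start q, \<dots>, start q + T1\<close> with
\<open>start q = \<lfloor>q N / (n - k)\<rfloor>\<close>: its first \<open>T1 + 1 - N\<close> positions are source symbols, already
sent in the clear, and its last \<open>N\<close> positions travel in the \<open>n - k\<close> parity coordinates of the
packets at those times; as \<open>start\<close> advances by \<open>N\<close> every \<open>n - k\<close> codewords, each packet
has room for exactly the parity positions falling at its time. Source symbol \<open>s\<^sub>t[j]\<close> is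
placed in a codeword whose window ends by time \<open>t + T[j]\<close>; the condition
\<open>N (k - j + 1) \<le> (n - k) (T[j] + 1 - N)\<close> is what makes this placement possible. An erased time \<open>t\<close> destroys at most one position of
each codeword, so \<open>N\<close> erasures leave at least \<open>T1 + 1 - N\<close> positions of the window, and these
determine the codeword because Reed--Solomon codes are MDS.

For the corollary, the source symbols receive the delays \<open>Tg 1 > Tg 2 > \<dots>\<close> in consecutive
blocks of sizes \<open>kcon 1, kcon 2, \<dots>\<close>; a symbol \<open>j\<close> of block \<open>l\<close> has
\<open>kcon 1 + \<dots> + kcon (l - 1) < j\<close>, so the rate hypothesis for \<open>l\<close> yields the condition above.\<close>

subsection \<open>Prime fields\<close>

definition Zp :: "nat \<Rightarrow> nat ring" where
  "Zp p = \<lparr>carrier = {..<p}, monoid.mult = (\<lambda>x y. x * y mod p), one = 1, zero = 0,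
     add = (\<lambda>x y. (x + y) mod p)\<rparr>"

lemma carrier_Zp [simp]: "carrier (Zp p) = {..<p}"
  by (simp add: Zp_def)

lemma Zp_cring:
  assumes p1: "1 < p"
  shows "cring (Zp p)"
proof -
  have ag: "abelian_group (Zp p)"
  proof (rule abelian_groupI)
    fix x y z assume x: "x \<in> carrier (Zp p)"
    show "x \<oplus>\<^bsub>Zp p\<^esub> y \<in> carrier (Zp p)" using p1 by (simp add: Zp_def)
    show "(x \<oplus>\<^bsub>Zp p\<^esub> y) \<oplus>\<^bsub>Zp p\<^esub> z = x \<oplus>\<^bsub>Zp p\<^esub> (y \<oplus>\<^bsub>Zp p\<^esub> z)"
      by (simp add: Zp_def) (metis add.assoc mod_add_left_eq mod_add_right_eq)
    show "x \<oplus>\<^bsub>Zp p\<^esub> y = y \<oplus>\<^bsub>Zp p\<^esub> x" by (simp add: Zp_def add.commute)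
    show "\<zero>\<^bsub>Zp p\<^esub> \<oplus>\<^bsub>Zp p\<^esub> x = x" using x by (simp add: Zp_def)
    show "\<exists>y\<in>carrier (Zp p). y \<oplus>\<^bsub>Zp p\<^esub> x = \<zero>\<^bsub>Zp p\<^esub>"
    proof (cases "x = 0")
      case True then show ?thesis using p1 by (intro bexI[of _ 0]) (auto simp: Zp_def)
    next
      case False then show ?thesis using x by (intro bexI[of _ "p - x"]) (auto simp: Zp_def)
    qed
  next
    show "\<zero>\<^bsub>Zp p\<^esub> \<in> carrier (Zp p)" using p1 by (simp add: Zp_def)
  qed
  have cm: "comm_monoid (Zp p)"
  proof (rule comm_monoidI)
    fix x y z assume x: "x \<in> carrier (Zp p)"
    show "x \<otimes>\<^bsub>Zp p\<^esub> y \<in> carrier (Zp p)" using p1 by (simp add: Zp_def)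
    show "(x \<otimes>\<^bsub>Zp p\<^esub> y) \<otimes>\<^bsub>Zp p\<^esub> z = x \<otimes>\<^bsub>Zp p\<^esub> (y \<otimes>\<^bsub>Zp p\<^esub> z)"
      by (simp add: Zp_def) (metis mod_mult_left_eq mod_mult_right_eq mult.assoc)
    show "x \<otimes>\<^bsub>Zp p\<^esub> y = y \<otimes>\<^bsub>Zp p\<^esub> x" by (simp add: Zp_def mult.commute)
    show "\<one>\<^bsub>Zp p\<^esub> \<otimes>\<^bsub>Zp p\<^esub> x = x" using x by (simp add: Zp_def)
  next
    show "\<one>\<^bsub>Zp p\<^esub> \<in> carrier (Zp p)" using p1 by (simp add: Zp_def)
  qed
  show ?thesis
  proof (rule cringI[OF ag cm])
    fix x y z
    show "(x \<oplus>\<^bsub>Zp p\<^esub> y) \<otimes>\<^bsub>Zp p\<^esub> z = x \<otimes>\<^bsub>Zp p\<^esub> z \<oplus>\<^bsub>Zp p\<^esub> y \<otimes>\<^bsub>Zp p\<^esub> z"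
      by (simp add: Zp_def) (metis add_mult_distrib mod_add_eq mod_mult_left_eq)
  qed
qed

lemma Zp_field:
  assumes p: "prime p"
  shows "field (Zp p)"
proof (rule cring.cring_fieldI2[OF Zp_cring])
  show p1: "1 < p" using p prime_gt_1_nat by blast
  show "\<zero>\<^bsub>Zp p\<^esub> \<noteq> \<one>\<^bsub>Zp p\<^esub>" by (simp add: Zp_def)
  fix a assume "a \<in> carrier (Zp p)" "a \<noteq> \<zero>\<^bsub>Zp p\<^esub>"
  then have a: "0 < a" "a < p" by (auto simp: Zp_def)
  then have "coprime a p"
    using p by (metis coprime_commute nat_dvd_not_less prime_imp_coprime_nat)
  then obtain x where "[a * x = Suc 0] (mod p)" using cong_solve_coprime_nat by blast
  then have "a * (x mod p) mod p = 1" using p1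
    by (metis One_nat_def cong_def mod_less mod_mult_right_eq)
  then show "\<exists>b\<in>carrier (Zp p). a \<otimes>\<^bsub>Zp p\<^esub> b = \<one>\<^bsub>Zp p\<^esub>"
    using p1 by (intro bexI[of _ "x mod p"]) (auto simp: Zp_def)
qed

subsection \<open>Reed--Solomon codes over the integers modulo a prime\<close>

lemma prime_dvd_poly_synthetic_div:
  fixes p a x :: int
  assumes "prime p" and "p dvd poly f a" and "p dvd poly f x" and "\<not> [x = a] (mod p)"
  shows "p dvd poly (synthetic_div f a) x"
proof -
  have "poly f x = (x - a) * poly (synthetic_div f a) x + poly f a"
    by (subst (1) synthetic_div_correct'[of a f, symmetric]) (simp add: algebra_simps)
  then have "p dvd (x - a) * poly (synthetic_div f a) x"
    using assms(2,3) by (metis dvd_add_left_iff)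
  moreover have "\<not> p dvd (x - a)" using assms(4) by (simp add: cong_iff_dvd_diff)
  ultimately show ?thesis using assms(1) by (meson prime_dvd_mult_iff)
qed

lemma prime_dvd_coeff_if_many_roots:
  fixes p :: int and f :: "int poly"
  assumes "prime p" and "finite S" and "S \<subseteq> {0..<p}" and "\<forall>x\<in>S. p dvd poly f x"
    and "degree f < card S"
  shows "p dvd coeff f i"
  using assms(2-)
proof (induction "card S" arbitrary: S f i)
  case 0
  then show ?case by simp
next
  case (Suc m)
  obtain a where a: "a \<in> S" using Suc.hyps(2) by (metis card.empty ex_in_conv nat.distinct(1))
  have pa: "p dvd poly f a" using Suc.prems(3) a by auto
  show ?case
  proof (cases "degree f = 0")
    case True
    then obtain c where f: "f = [:c:]" by (meson degree_eq_zeroE)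
    then show ?thesis using pa by (cases i) auto
  next
    case False
    define g where "g = synthetic_div f a"
    define S' where "S' = S - {a}"
    have cS': "m = card S'" using Suc.hyps(2) Suc.prems(1) a unfolding S'_def by simp
    have fg: "f = [:-a, 1:] * g + [:poly f a:]"
      unfolding g_def using synthetic_div_correct'[of a f] by simp
    have dg: "degree g < card S'" using False Suc.prems(4) cS' Suc.hyps(2) unfolding g_def
      by (simp add: degree_synthetic_div)
    have rg: "\<forall>x\<in>S'. p dvd poly g x"
    proof
      fix x assume x: "x \<in> S'"
      have "x \<in> {0..<p}" "a \<in> {0..<p}" "x \<noteq> a" using x a Suc.prems(2) unfolding S'_def by auto
      then have "\<not> [x = a] (mod p)" using cong_less_imp_eq_int[of x p a] by auto
      then show "p dvd poly g x"
        using prime_dvd_poly_synthetic_div[OF assms(1) pa] Suc.prems(3) x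
        unfolding g_def S'_def by blast
    qed
    have IH: "p dvd coeff g j" for j
      using Suc.hyps(1)[OF cS' _ _ rg dg] Suc.prems(1,2) unfolding S'_def by auto
    have "coeff f i = - a * coeff g i + coeff (pCons 0 g) i + coeff [:poly f a:] i"
      by (subst fg) (simp add: mult_pCons_left)
    moreover have "p dvd coeff (pCons 0 g) i" using IH by (cases i) auto
    moreover have "p dvd coeff [:poly f a:] i" using pa by (cases i) auto
    ultimately show ?thesis using IH by (simp add: dvd_add)
  qed
qed

definition rs_eval :: "nat \<Rightarrow> nat \<Rightarrow> (nat \<Rightarrow> nat) \<Rightarrow> nat \<Rightarrow> nat" where
  "rs_eval p K c d = (\<Sum>i<K. c i * d ^ i) mod p"

lemma rs_eval_inj:
  assumes p: "prime p" and c: "\<forall>i<K. c i < p" and c': "\<forall>i<K. c' i < p"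
    and S: "finite S" "S \<subseteq> {..<p}" "K \<le> card S"
    and eq: "\<forall>d\<in>S. rs_eval p K c d = rs_eval p K c' d" and i: "i < K"
  shows "c i = c' i"
proof -
  obtain S' where S': "S' \<subseteq> S" "card S' = K" using S(3) by (meson obtain_subset_with_card_n)
  define f :: "int poly" where "f = (\<Sum>i<K. monom (int (c i) - int (c' i)) i)"
  have cf: "coeff f j = (if j < K then int (c j) - int (c' j) else 0)" for j
    unfolding f_def by (simp add: coeff_sum coeff_monom)
  have pf: "poly f x = (\<Sum>i<K. (int (c i) - int (c' i)) * x ^ i)" for x
    unfolding f_def by (simp add: poly_sum poly_monom)
  have "degree f \<le> K - 1"
    by (rule degree_le) (auto simp: cf)
  then have degf: "degree f < card (int ` S')" using S' i by (simp add: card_image)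
  have roots: "\<forall>x\<in>int ` S'. int p dvd poly f x"
  proof
    fix x assume "x \<in> int ` S'"
    then obtain d where d: "d \<in> S" "x = int d" using S' by auto
    have "(\<Sum>i<K. c i * d ^ i) mod p = (\<Sum>i<K. c' i * d ^ i) mod p"
      using eq d unfolding rs_eval_def by auto
    then have "[int (\<Sum>i<K. c i * d ^ i) = int (\<Sum>i<K. c' i * d ^ i)] (mod int p)"
      by (metis cong_def cong_int_iff)
    then have "int p dvd int (\<Sum>i<K. c i * d ^ i) - int (\<Sum>i<K. c' i * d ^ i)"
      by (simp add: cong_iff_dvd_diff)
    moreover have "int (\<Sum>i<K. c i * d ^ i) - int (\<Sum>i<K. c' i * d ^ i) = poly f x"
      unfolding pf d(2) by (simp add: sum_subtractf algebra_simps)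
    ultimately show "int p dvd poly f x" by simp
  qed
  have "finite S'" using S' S(1) finite_subset by blast
  moreover have "int ` S' \<subseteq> {0..<int p}" using S' S(2) by auto
  ultimately have "int p dvd coeff f i"
    using prime_dvd_coeff_if_many_roots[of "int p" "int ` S'" f i] p roots degf by simp
  then have "[int (c i) = int (c' i)] (mod int p)" using cf i by (simp add: cong_iff_dvd_diff)
  then have "int (c i) = int (c' i)"
    by (rule cong_less_imp_eq_int[rotated 4]) (use c c' i in auto)
  then show ?thesis by simp
qed

definition rs_coeffs :: "nat \<Rightarrow> nat \<Rightarrow> (nat \<Rightarrow> nat) set" where
  "rs_coeffs p K = Pi\<^sub>E {..<K} (\<lambda>_. {..<p})"

text \<open>Evaluation at \<open>0, \<dots>, K - 1\<close> is injective on the finite set \<open>rs_coeffs p K\<close>, hence onto.\<close>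

lemma rs_interpolation_exists:
  assumes p: "prime p" and K: "K \<le> p"
  shows "\<exists>c\<in>rs_coeffs p K. \<forall>d<K. rs_eval p K c d = v d mod p"
proof -
  have p0: "0 < p" using p prime_gt_0_nat by blast
  define \<Phi> where "\<Phi> c = restrict (rs_eval p K c) {..<K}" for c
  have fin: "finite (rs_coeffs p K)" unfolding rs_coeffs_def by (simp add: finite_PiE)
  have sub: "\<Phi> ` rs_coeffs p K \<subseteq> rs_coeffs p K"
    unfolding \<Phi>_def rs_coeffs_def rs_eval_def using p0 by (simp add: image_subset_iff PiE_iff)
  have inj: "inj_on \<Phi> (rs_coeffs p K)"
  proof (rule inj_onI)
    fix c c' assume c: "c \<in> rs_coeffs p K" and c': "c' \<in> rs_coeffs p K" and e: "\<Phi> c = \<Phi> c'"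
    show "c = c'"
    proof (rule ext)
      fix i
      show "c i = c' i"
      proof (cases "i < K")
        case True
        have "\<forall>d\<in>{..<K}. rs_eval p K c d = rs_eval p K c' d"
          using e unfolding \<Phi>_def by (metis restrict_apply')
        then show ?thesis
          using rs_eval_inj[OF p, of K c c' "{..<K}" i] c c' K True
          unfolding rs_coeffs_def by (simp add: PiE_iff)
      next
        case False
        then show ?thesis using c c' unfolding rs_coeffs_def by (metis PiE_arb lessThan_iff)
      qed
    qed
  qed
  have "\<Phi> ` rs_coeffs p K = rs_coeffs p K" using endo_inj_surj[OF fin sub inj] .
  moreover have "restrict (\<lambda>d. v d mod p) {..<K} \<in> rs_coeffs p K"
    unfolding rs_coeffs_def using p0 by (simp add: PiE_iff)
  ultimately obtain c where "c \<in> rs_coeffs p K" "\<Phi> c = restrict (\<lambda>d. v d mod p) {..<K}"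
    by (metis imageE)
  then show ?thesis unfolding \<Phi>_def by (metis lessThan_iff restrict_apply')
qed

definition rs_interp :: "nat \<Rightarrow> nat \<Rightarrow> (nat \<Rightarrow> nat) \<Rightarrow> nat \<Rightarrow> nat" where
  "rs_interp p K v = (SOME c. c \<in> rs_coeffs p K \<and> (\<forall>d<K. rs_eval p K c d = v d mod p))"

definition rs_enc :: "nat \<Rightarrow> nat \<Rightarrow> (nat \<Rightarrow> nat) \<Rightarrow> nat \<Rightarrow> nat" where
  "rs_enc p K v = rs_eval p K (rs_interp p K v)"

lemma rs_interp_spec:
  assumes "prime p" "K \<le> p"
  shows "rs_interp p K v \<in> rs_coeffs p K \<and> (\<forall>d<K. rs_eval p K (rs_interp p K v) d = v d mod p)"
proof -
  have "\<exists>c. c \<in> rs_coeffs p K \<and> (\<forall>d<K. rs_eval p K c d = v d mod p)"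
    using rs_interpolation_exists[OF assms] by blast
  from someI_ex[OF this] show ?thesis unfolding rs_interp_def .
qed

lemma rs_enc_systematic:
  assumes "prime p" "K \<le> p" "d < K"
  shows "rs_enc p K v d = v d mod p"
  using rs_interp_spec[OF assms(1,2)] assms(3) unfolding rs_enc_def by blast

lemma rs_enc_less:
  assumes "prime p"
  shows "rs_enc p K v d < p"
  using assms prime_gt_0_nat unfolding rs_enc_def rs_eval_def by auto

lemma rs_enc_cong:
  assumes "\<forall>d<K. v d = v' d"
  shows "rs_enc p K v = rs_enc p K v'"
proof -
  have "(\<lambda>c. c \<in> rs_coeffs p K \<and> (\<forall>d<K. rs_eval p K c d = v d mod p)) =
        (\<lambda>c. c \<in> rs_coeffs p K \<and> (\<forall>d<K. rs_eval p K c d = v' d mod p))"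
    using assms by auto
  then show ?thesis unfolding rs_enc_def rs_interp_def by simp
qed

lemma rs_enc_mds:
  assumes p: "prime p" and S: "finite S" "S \<subseteq> {..<p}" "K \<le> card S"
    and eq: "\<forall>d\<in>S. rs_enc p K v d = rs_enc p K v' d" and d: "d < K"
  shows "v d mod p = v' d mod p"
proof -
  have "K \<le> p" using S card_mono[OF _ S(2)] by simp
  note c = rs_interp_spec[OF p this, of v] and c' = rs_interp_spec[OF p this, of v']
  have "rs_interp p K v i = rs_interp p K v' i" if "i < K" for i
  proof (rule rs_eval_inj[OF p _ _ S(1,2,3) _ that])
    show "\<forall>i<K. rs_interp p K v i < p" "\<forall>i<K. rs_interp p K v' i < p"
      using c c' unfolding rs_coeffs_def by (simp_all add: PiE_iff)
    show "\<forall>d\<in>S. rs_eval p K (rs_interp p K v) d = rs_eval p K (rs_interp p K v') d"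
      using eq unfolding rs_enc_def .
  qed
  then have "rs_eval p K (rs_interp p K v) d = rs_eval p K (rs_interp p K v') d"
    unfolding rs_eval_def by simp
  then show ?thesis using c c' d by auto
qed

lemma int_le_div_iff:
  fixes a b c :: int
  assumes b: "0 < b"
  shows "c \<le> a div b \<longleftrightarrow> c * b \<le> a"
proof
  assume "c \<le> a div b"
  then have "c * b \<le> (a div b) * b" using b by (simp add: mult_right_mono)
  also have "\<dots> \<le> a" using b by (metis div_mult_mod_eq le_add_same_cancel1 pos_mod_sign)
  finally show "c * b \<le> a" .
next
  assume h: "c * b \<le> a"
  show "c \<le> a div b"
  proof (rule ccontr)
    assume "\<not> c \<le> a div b"
    then have "(a div b + 1) * b \<le> c * b" using b by (simp add: mult_right_mono)
    moreover have "a < (a div b + 1) * b"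
      using b by (metis add.commute distrib_right div_mult_mod_eq mult_1 add_less_cancel_left pos_mod_bound)
    ultimately show False using h by simp
  qed
qed

lemma int_div_le_iff:
  fixes a b c :: int
  assumes "0 < b"
  shows "a div b \<le> c \<longleftrightarrow> a < (c + 1) * b"
  using int_le_div_iff[OF assms, of "c + 1" a] by linarith

definition ceil_div :: "int \<Rightarrow> int \<Rightarrow> int" where
  "ceil_div x m = - ((- x) div m)"

lemma le_ceil_div_mult: "0 < m \<Longrightarrow> x \<le> ceil_div x m * m"
  unfolding ceil_div_def using int_le_div_iff[of m "(- x) div m" "- x"] by simp

lemma ceil_div_minus_one_mult_less: "0 < m \<Longrightarrow> (ceil_div x m - 1) * m < x"
  unfolding ceil_div_def using int_div_le_iff[of m "- x" "(- x) div m"] by (simp add: algebra_simps)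

lemma rcv_agreeD:
  assumes "rcv_agree n m y y'" "u \<le> m"
  shows "y u = None \<longleftrightarrow> y' u = None"
    and "y u = Some a \<Longrightarrow> y' u = Some b \<Longrightarrow> i \<in> {1..n} \<Longrightarrow> a i = b i"
  using assms unfolding rcv_agree_def by auto

lemma rcv_agreeI:
  assumes "\<And>u. u \<le> m \<Longrightarrow> y u = None \<longleftrightarrow> y' u = None"
    and "\<And>u a b i. u \<le> m \<Longrightarrow> y u = Some a \<Longrightarrow> y' u = Some b \<Longrightarrow> i \<in> {1..n} \<Longrightarrow> a i = b i"
  shows "rcv_agree n m y y'"
  using assms unfolding rcv_agree_def by auto

lemma rcv_agree_refl: "rcv_agree n m y y"
  by (rule rcv_agreeI) auto

lemma rcv_agree_sym:
  assumes "rcv_agree n m y y'"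
  shows "rcv_agree n m y' y"
proof (rule rcv_agreeI)
  fix u assume u: "u \<le> m"
  show "y' u = None \<longleftrightarrow> y u = None" using rcv_agreeD(1)[OF assms u] by simp
  fix a b i assume "y' u = Some a" "y u = Some b" "i \<in> {1..n}"
  then show "a i = b i" using rcv_agreeD(2)[OF assms u] by metis
qed

lemma rcv_agree_trans:
  assumes h1: "rcv_agree n m y y'" and h2: "rcv_agree n m y' y''"
  shows "rcv_agree n m y y''"
proof (rule rcv_agreeI)
  fix u assume u: "u \<le> m"
  show "y u = None \<longleftrightarrow> y'' u = None" using rcv_agreeD(1)[OF h1 u] rcv_agreeD(1)[OF h2 u] by simp
  fix a b i assume a: "y u = Some a" and b: "y'' u = Some b" and i: "i \<in> {1..n}"
  obtain c where c: "y' u = Some c" using rcv_agreeD(1)[OF h1 u] a by auto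
  show "a i = b i" using rcv_agreeD(2)[OF h1 u a c i] rcv_agreeD(2)[OF h2 u c b i] by simp
qed

lemma rcv_agree_received_packet:
  assumes "rcv_agree n m (received enc s E) (received enc s' E')"
    and "u \<le> m" "u \<notin> E" "i \<in> {1..n}"
  shows "enc u s i = enc u s' i"
  using assms unfolding rcv_agree_def received_def by (auto split: if_splits)

text \<open>Times before \<open>0\<close> count as unerased.\<close>

lemma card_unerased_window:
  fixes a :: int
  assumes "finite E" "card E \<le> N"
  shows "W - N \<le> card {d \<in> {..<W}. \<not> (0 \<le> a + int d \<and> nat (a + int d) \<in> E)}"
proof -
  define C where "C = {d \<in> {..<W}. 0 \<le> a + int d \<and> nat (a + int d) \<in> E}"
  have "inj_on (\<lambda>d. nat (a + int d)) C" unfolding C_def by (rule inj_onI) auto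
  moreover have "(\<lambda>d. nat (a + int d)) ` C \<subseteq> E" unfolding C_def by auto
  ultimately have "card C \<le> N" using assms by (meson card_inj_on_le order_trans)
  moreover have "{d \<in> {..<W}. \<not> (0 \<le> a + int d \<and> nat (a + int d) \<in> E)} = {..<W} - C"
    unfolding C_def by auto
  moreover have "C \<subseteq> {..<W}" unfolding C_def by auto
  ultimately show ?thesis by (simp add: card_Diff_subset finite_subset)
qed

subsection \<open>The diagonally interleaved code\<close>

locale diagonal_code =
  fixes p n k N T1 :: nat and T :: "nat \<Rightarrow> nat"
  assumes p: "prime p" and N_ge_1: "1 \<le> N" and k_less_n: "k < n" and N_le_T1: "N \<le> T1"
    and T1_less_p: "T1 + 1 \<le> p"
    and T_le_T1: "\<And>j. j \<in> {1..k} \<Longrightarrow> T j \<le> T1"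
    and delay_condition:
      "\<And>j. j \<in> {1..k} \<Longrightarrow> int N * (int k - int j + 1) \<le> int (n - k) * (int (T j) + 1 - int N)"
begin

abbreviation dim :: nat where "dim \<equiv> T1 + 1 - N"

definition start :: "int \<Rightarrow> int" where "start q = q * int N div int (n - k)"

text \<open>Source symbol \<open>s\<^sub>t[j]\<close> is position \<open>t - start q\<close> of codeword \<open>q = sym_base t + k - j\<close>,
and parity coordinate \<open>k + 1 + e\<close> of packet \<open>t\<close> carries position \<open>t - start q\<close> of codeword
\<open>q = par_base t + e\<close>. Here \<open>sym_base t\<close> is the least \<open>q\<close> with \<open>t - T1 + N \<le> start q\<close>, so that \<open>t\<close>
is an information position of \<open>q\<close>, and \<open>par_base t\<close> the least \<open>q\<close> with \<open>t - T1 \<le> start q\<close>.\<close>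

definition sym_base :: "int \<Rightarrow> int" where
  "sym_base t = ceil_div ((t - int T1 + int N) * int (n - k)) (int N)"

definition par_base :: "int \<Rightarrow> int" where
  "par_base t = ceil_div ((t - int T1) * int (n - k)) (int N)"

text \<open>Information positions at negative times are filled with zeros.\<close>

definition info :: "(nat \<Rightarrow> nat \<Rightarrow> nat) \<Rightarrow> int \<Rightarrow> nat \<Rightarrow> nat" where
  "info s q d = (let t = start q + int d; i = sym_base t + int k - q in
      if 0 \<le> t \<and> 1 \<le> i \<and> i \<le> int k then s (nat t) (nat i) mod p else 0)"

definition codeword :: "(nat \<Rightarrow> nat \<Rightarrow> nat) \<Rightarrow> int \<Rightarrow> nat \<Rightarrow> nat" where
  "codeword s q = rs_enc p dim (info s q)"

definition enc :: "nat \<Rightarrow> (nat \<Rightarrow> nat \<Rightarrow> nat) \<Rightarrow> nat \<Rightarrow> nat" where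
  "enc u s i = (if i \<le> k then s u i else
     (let q = par_base (int u) + int (i - k - 1) in codeword s q (nat (int u - start q))))"

definition admissible :: "(nat \<Rightarrow> nat \<Rightarrow> nat) \<Rightarrow> nat set \<Rightarrow> bool" where
  "admissible s E \<longleftrightarrow> finite E \<and> card E = N \<and> (\<forall>u j. j \<in> {1..k} \<longrightarrow> s u j \<in> {..<p})"

text \<open>The decoder outputs \<open>s\<^sub>t[j]\<close> for any admissible message and erasure pattern explaining the
data received up to time \<open>t + T j\<close>; it is correct because that value is unique.\<close>

definition dec :: "nat \<Rightarrow> nat \<Rightarrow> (nat \<Rightarrow> (nat \<Rightarrow> nat) option) \<Rightarrow> nat" where
  "dec j t y = (SOME v. \<exists>s E. admissible s E \<and> rcv_agree n (t + T j) (received enc s E) y \<and> v = s t j)"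

lemma n_minus_k_pos: "0 < int (n - k)"
  using k_less_n by simp

lemma N_pos: "0 < int N"
  using N_ge_1 by simp

lemma le_start_iff: "a \<le> start q \<longleftrightarrow> a * int (n - k) \<le> q * int N"
  unfolding start_def using int_le_div_iff[OF n_minus_k_pos] by simp

lemma start_le_iff: "start q \<le> b \<longleftrightarrow> q * int N < (b + 1) * int (n - k)"
  unfolding start_def using int_div_le_iff[OF n_minus_k_pos] by simp

lemma start_par_base_le:
  assumes "0 \<le> e" "e < int (n - k)"
  shows "start (par_base u + e) \<le> u - int T1 + int N - 1"
proof -
  have b: "(par_base u - 1) * int N < (u - int T1) * int (n - k)"
    unfolding par_base_def by (rule ceil_div_minus_one_mult_less[OF N_pos])
  have "(e + 1) * int N \<le> int (n - k) * int N"
    using assms N_pos by (intro mult_right_mono) auto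
  then have "(par_base u + e) * int N \<le> (par_base u - 1) * int N + int (n - k) * int N"
    by (simp add: algebra_simps)
  with b have "(par_base u + e) * int N < (u - int T1 + int N) * int (n - k)"
    by (simp add: algebra_simps)
  then show ?thesis unfolding start_le_iff by simp
qed

text \<open>The window of the codeword carrying \<open>s\<^sub>t[j]\<close> has \<open>t\<close> among its information positions
and ends by time \<open>t + T j\<close>; the upper bound is where the delay condition is used.\<close>

lemma start_sym_base_bounds:
  assumes j: "j \<in> {1..k}"
  shows "t - int T1 + int N \<le> start (sym_base t + int k - int j)"
    and "start (sym_base t + int k - int j) \<le> t - int T1 + int (T j)"
proof -
  have a: "(t - int T1 + int N) * int (n - k) \<le> sym_base t * int N"
    unfolding sym_base_def by (rule le_ceil_div_mult[OF N_pos])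
  have b: "(sym_base t - 1) * int N < (t - int T1 + int N) * int (n - k)"
    unfolding sym_base_def by (rule ceil_div_minus_one_mult_less[OF N_pos])
  have "sym_base t * int N \<le> (sym_base t + int k - int j) * int N"
    using j N_pos by (simp add: mult_right_mono)
  with a show "t - int T1 + int N \<le> start (sym_base t + int k - int j)"
    unfolding le_start_iff by linarith
  have "(sym_base t + int k - int j) * int N = (sym_base t - 1) * int N + int N * (int k - int j + 1)"
    by (simp add: algebra_simps)
  also have "\<dots> < (t - int T1 + int N) * int (n - k) + int (n - k) * (int (T j) + 1 - int N)"
    using b delay_condition[OF j] by linarith
  also have "\<dots> = (t - int T1 + int (T j) + 1) * int (n - k)"
    by (simp add: algebra_simps)
  finally show "start (sym_base t + int k - int j) \<le> t - int T1 + int (T j)"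
    unfolding start_le_iff by simp
qed

text \<open>Every parity position \<open>d\<close> of codeword \<open>q\<close> has a parity coordinate in packet \<open>start q + d\<close>.\<close>

lemma parity_coordinate_bounds:
  assumes "dim \<le> d" and "d \<le> T1"
  shows "0 \<le> q - par_base (start q + int d)" and "q - par_base (start q + int d) < int (n - k)"
proof -
  define t where "t = start q + int d"
  have a: "(t - int T1) * int (n - k) \<le> par_base t * int N"
    unfolding par_base_def by (rule le_ceil_div_mult[OF N_pos])
  have b: "(par_base t - 1) * int N < (t - int T1) * int (n - k)"
    unfolding par_base_def by (rule ceil_div_minus_one_mult_less[OF N_pos])
  have "t - int T1 \<le> start q" using assms unfolding t_def by simp
  then have "(t - int T1) * int (n - k) \<le> q * int N" unfolding le_start_iff .
  with b have "(par_base t - 1) * int N < q * int N" by linarith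
  then show "0 \<le> q - par_base t" using N_pos by (simp add: mult_less_cancel_right)
  have "start q \<le> t - int T1 + int N - 1" using assms N_le_T1 unfolding t_def by simp
  then have "q * int N < (t - int T1 + int N) * int (n - k)" unfolding start_le_iff by simp
  also have "\<dots> \<le> (par_base t + int (n - k)) * int N" using a by (simp add: algebra_simps)
  finally show "q - par_base t < int (n - k)" using N_pos by (simp add: mult_less_cancel_right)
qed

lemma info_cong:
  assumes "0 \<le> start q + int d \<Longrightarrow>
      \<forall>i\<in>{1..k}. s (nat (start q + int d)) i = s' (nat (start q + int d)) i"
  shows "info s q d = info s' q d"
proof -
  have "s (nat (start q + int d)) (nat i) = s' (nat (start q + int d)) (nat i)"
    if "0 \<le> start q + int d" "1 \<le> i" "i \<le> int k" for i
    using assms that by (metis atLeastAtMost_iff nat_mono nat_one_as_int nat_int)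
  then show ?thesis unfolding info_def Let_def by auto
qed

lemma enc_causal:
  assumes "msg_agree k u s s'" and "i \<in> {1..n}"
  shows "enc u s i = enc u s' i"
proof (cases "i \<le> k")
  case True
  then show ?thesis using assms unfolding enc_def msg_agree_def by auto
next
  case False
  define q where "q = par_base (int u) + int (i - k - 1)"
  have "start q \<le> int u - int T1 + int N - 1"
    using start_par_base_le False assms(2) unfolding q_def by auto
  then have "info s q d = info s' q d" if "d < dim" for d
    using assms(1) that N_le_T1 unfolding msg_agree_def by (intro info_cong) auto
  then have "codeword s q = codeword s' q" unfolding codeword_def by (intro rs_enc_cong) blast
  then show ?thesis using False unfolding enc_def Let_def q_def by simp
qed

lemma codeword_agree:
  assumes rcv: "\<And>u i. u \<le> m \<Longrightarrow> u \<notin> E \<Longrightarrow> i \<in> {1..n} \<Longrightarrow> enc u s i = enc u s' i"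
    and parity_nonneg: "0 \<le> start q + int dim" and horizon: "start q + int T1 \<le> int m"
    and d: "d \<le> T1" and unerased: "\<not> (0 \<le> start q + int d \<and> nat (start q + int d) \<in> E)"
  shows "codeword s q d = codeword s' q d"
proof (cases "d < dim")
  case True
  have "info s q d = info s' q d"
  proof (rule info_cong)
    assume t: "0 \<le> start q + int d"
    show "\<forall>i\<in>{1..k}. s (nat (start q + int d)) i = s' (nat (start q + int d)) i"
    proof
      fix i assume i: "i \<in> {1..k}"
      have "enc (nat (start q + int d)) s i = enc (nat (start q + int d)) s' i"
        using rcv[of "nat (start q + int d)" i] t horizon d unerased i k_less_n by auto
      then show "s (nat (start q + int d)) i = s' (nat (start q + int d)) i"
        using i unfolding enc_def by simp
    qed
  qed
  then show ?thesis
    unfolding codeword_def using rs_enc_systematic[OF p _ True] T1_less_p by simp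
next
  case False
  define t where "t = start q + int d"
  define e where "e = q - par_base t"
  have t: "0 \<le> t" "nat t \<notin> E" "nat t \<le> m"
    using parity_nonneg False unerased horizon d unfolding t_def by auto
  have e: "0 \<le> e" "e < int (n - k)"
    using parity_coordinate_bounds[OF _ d, of q] False unfolding e_def t_def by auto
  have "enc (nat t) s (k + 1 + nat e) = enc (nat t) s' (k + 1 + nat e)"
    using rcv[OF t(3) t(2)] e by simp
  moreover have "par_base t + int (k + 1 + nat e - k - 1) = q" "nat (t - start q) = d"
    using e unfolding e_def t_def by auto
  ultimately show ?thesis using t(1) unfolding enc_def by (simp add: Let_def)
qed

text \<open>Erasing \<open>N\<close> times leaves at least \<open>dim\<close> positions of the window of \<open>q\<close>, and these
determine the codeword.\<close>

lemma info_determined: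
  assumes E: "finite E" "card E \<le> N"
    and rcv: "\<And>u i. u \<le> m \<Longrightarrow> u \<notin> E \<Longrightarrow> i \<in> {1..n} \<Longrightarrow> enc u s i = enc u s' i"
    and window: "0 \<le> start q + int dim" "start q + int T1 \<le> int m"
    and d: "d < dim"
  shows "info s q d mod p = info s' q d mod p"
proof (rule rs_enc_mds[OF p _ _ _ _ d])
  define S where "S = {d \<in> {..<T1 + 1}. \<not> (0 \<le> start q + int d \<and> nat (start q + int d) \<in> E)}"
  show "finite S" "S \<subseteq> {..<p}" using T1_less_p unfolding S_def by auto
  show "dim \<le> card S" using card_unerased_window[OF E, of "T1 + 1" "start q"] unfolding S_def .
  show "\<forall>d\<in>S. rs_enc p dim (info s q) d = rs_enc p dim (info s' q) d"
    using codeword_agree[OF rcv window] unfolding S_def codeword_def by auto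
qed

lemma decoding_unique:
  assumes adm: "admissible s E" "admissible s' E'" and j: "j \<in> {1..k}"
    and agree: "rcv_agree n (t + T j) (received enc s E) (received enc s' E')"
  shows "s t j = s' t j"
proof -
  have rcv: "enc u s i = enc u s' i" if "u \<le> t + T j" "u \<notin> E" "i \<in> {1..n}" for u i
    using rcv_agree_received_packet[OF agree that] .
  show ?thesis
  proof (cases "t \<in> E")
    case False
    then show ?thesis using rcv[of t j] j k_less_n unfolding enc_def by auto
  next
    case True
    define q where "q = sym_base (int t) + int k - int j"
    note window = start_sym_base_bounds[OF j, of "int t", folded q_def]
    define d0 where "d0 = nat (int t - start q)"
    have d0: "d0 < dim" "start q + int d0 = int t"
      using window N_le_T1 T_le_T1[OF j] unfolding d0_def by auto
    have "info s q d0 mod p = info s' q d0 mod p"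
      using adm(1) window T_le_T1[OF j] N_le_T1 unfolding admissible_def
      by (intro info_determined[OF _ _ rcv _ _ d0(1)]) auto
    moreover have "info s q d0 = s t j mod p" "info s' q d0 = s' t j mod p"
      using d0(2) j unfolding info_def Let_def q_def by auto
    moreover have "s t j < p" "s' t j < p" using adm j unfolding admissible_def by auto
    ultimately show ?thesis by simp
  qed
qed

lemma dec_correct:
  assumes "admissible s E" and "j \<in> {1..k}"
  shows "dec j t (received enc s E) = s t j"
proof -
  let ?P = "\<lambda>v. \<exists>s' E'. admissible s' E' \<and>
    rcv_agree n (t + T j) (received enc s' E') (received enc s E) \<and> v = s' t j"
  have "\<exists>v. ?P v" using assms(1) rcv_agree_refl by blast
  from someI_ex[OF this] have "?P (dec j t (received enc s E))"
    unfolding dec_def .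
  then obtain s' E' where "admissible s' E'"
      and "rcv_agree n (t + T j) (received enc s' E') (received enc s E)"
      and "dec j t (received enc s E) = s' t j"
    by blast
  then show ?thesis using decoding_unique[of s' E' s E j t] assms by simp
qed

lemma is_p2p_code: "is_p2p_code {..<p} n k T enc dec"
proof -
  have "\<forall>i\<in>{1..n}. enc t s i \<in> {..<p}" if "\<forall>u j. j \<in> {1..k} \<longrightarrow> s u j \<in> {..<p}" for t s
    using that rs_enc_less[OF p] unfolding enc_def Let_def codeword_def by auto
  moreover have "dec j t y = dec j t y'" if "rcv_agree n (t + T j) y y'" for j t y y'
  proof -
    have "rcv_agree n (t + T j) z y \<longleftrightarrow> rcv_agree n (t + T j) z y'" for z
      using that rcv_agree_sym rcv_agree_trans by metis
    then show ?thesis unfolding dec_def by simp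
  qed
  moreover have "\<forall>i\<in>{1..n}. enc t s i = enc t s' i" if "msg_agree k t s s'" for t s s'
    using that enc_causal by blast
  ultimately show ?thesis unfolding is_p2p_code_def by blast
qed

lemma achieves_spectrum: "achieves_spectrum {..<p} n k T N enc dec"
  unfolding achieves_spectrum_def
proof (intro allI impI)
  fix E :: "nat set" and s :: "nat \<Rightarrow> nat \<Rightarrow> nat" and t j :: nat
  assume "finite E" "card E = N" "\<forall>u j'. j' \<in> {1..k} \<longrightarrow> s u j' \<in> {..<p}" "j \<in> {1..k}"
  then show "dec j t (received enc s E) = s t j"
    by (intro dec_correct) (auto simp: admissible_def)
qed

end

theorem delay_spectrum_achievable:
  fixes N n k :: nat and T :: "nat \<Rightarrow> nat"
  assumes "1 \<le> N"
    and cond: "\<And>j. j \<in> {1..k} \<Longrightarrow> int N * (int k - int j + 1) \<le> int (n - k) * (int (T j) + 1 - int N)"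
  shows "\<exists>(R :: nat ring) enc dec. field R \<and> finite (carrier R) \<and>
           is_p2p_code (carrier R) n k T enc dec \<and> achieves_spectrum (carrier R) n k T N enc dec"
proof (cases "k = 0")
  case True
  have "is_p2p_code {..<2} n k T (\<lambda>_ _ _. 0::nat) (\<lambda>_ _ _. 0)"
    "achieves_spectrum {..<2} n k T N (\<lambda>_ _ _. 0::nat) (\<lambda>_ _ _. 0)"
    unfolding is_p2p_code_def achieves_spectrum_def using True by auto
  then show ?thesis using Zp_field[of 2] by fastforce
next
  case False
  define T1 where "T1 = Max (T ` {1..k})"
  have T_le_T1: "T j \<le> T1" if "j \<in> {1..k}" for j
    unfolding T1_def using that by simp
  have "int N \<le> int (n - k) * (int (T k) + 1 - int N)"
    using cond[of k] False by simp
  then have "0 < int (n - k) * (int (T k) + 1 - int N)"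
    using assms(1) by linarith
  then have "0 < int (n - k)" "0 < int (T k) + 1 - int N"
    by (auto simp: zero_less_mult_iff)
  then have "k < n" "N \<le> T1" using T_le_T1[of k] False by auto
  obtain p where "prime p" "T1 + 1 < p" using bigger_prime by blast
  then interpret diagonal_code p n k N T1 T
    using assms \<open>k < n\<close> \<open>N \<le> T1\<close> T_le_T1 by unfold_locales auto
  show ?thesis
    using Zp_field[OF p] is_p2p_code achieves_spectrum by fastforce
qed

definition block_of :: "(nat \<Rightarrow> nat) \<Rightarrow> nat \<Rightarrow> nat" where
  "block_of b i = (LEAST l. i \<le> (\<Sum>m\<in>{1..l}. b m))"

lemma block_of_bounds:
  assumes "1 \<le> i" and "i \<le> (\<Sum>m\<in>{1..L}. b m)"
  shows "1 \<le> block_of b i" and "block_of b i \<le> L"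
    and "(\<Sum>m\<in>{1..<block_of b i}. b m) < i" and "i \<le> (\<Sum>m\<in>{1..block_of b i}. b m)"
proof -
  show upper: "i \<le> (\<Sum>m\<in>{1..block_of b i}. b m)"
    unfolding block_of_def by (rule LeastI[of _ L]) (rule assms(2))
  show "block_of b i \<le> L"
    unfolding block_of_def by (rule Least_le) (rule assms(2))
  show pos: "1 \<le> block_of b i"
    using upper assms(1) by (cases "block_of b i") auto
  have "\<not> i \<le> (\<Sum>m\<in>{1..block_of b i - 1}. b m)"
  proof
    assume "i \<le> (\<Sum>m\<in>{1..block_of b i - 1}. b m)"
    then have "block_of b i \<le> block_of b i - 1"
      unfolding block_of_def[of b i] by (rule Least_le)
    then show False using pos by simp
  qed
  moreover have "{1..block_of b i - 1} = {1..<block_of b i}" using pos by auto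
  ultimately show "(\<Sum>m\<in>{1..<block_of b i}. b m) < i" by simp
qed

lemma card_block_of_le:
  assumes "k \<le> (\<Sum>m\<in>{1..L}. b m)"
  shows "card {i \<in> {1..k}. block_of b i = l} \<le> b l"
proof -
  have "{i \<in> {1..k}. block_of b i = l} \<subseteq> {(\<Sum>m\<in>{1..<l}. b m)<..(\<Sum>m\<in>{1..<l}. b m) + b l}"
  proof
    fix i assume i: "i \<in> {i \<in> {1..k}. block_of b i = l}"
    then have "1 \<le> i" "i \<le> (\<Sum>m\<in>{1..L}. b m)" using assms by auto
    note bounds = block_of_bounds[OF this]
    have l: "block_of b i = l" using i by simp
    have "(\<Sum>m\<in>{1..l}. b m) = (\<Sum>m\<in>{1..<l}. b m) + b l"
      using bounds(1) unfolding l
      by (simp add: atLeastLessThanSuc_atLeastAtMost[symmetric] sum.atLeastLessThan_Suc)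
    then show "i \<in> {(\<Sum>m\<in>{1..<l}. b m)<..(\<Sum>m\<in>{1..<l}. b m) + b l}"
      using bounds(3,4) unfolding l by auto
  qed
  from card_mono[OF _ this] show ?thesis by simp
qed

lemma delay_condition_of_rate_bound:
  fixes n k N j K T :: nat
  assumes "k \<le> n" "0 < n" "K < j"
    and rate: "real k \<le> real n - real n * real N * (1 - real K / real n) / (real T + 1)"
  shows "int N * (int k - int j + 1) \<le> int (n - k) * (int T + 1 - int N)"
proof -
  define x where "x = real T + 1"
  have x: "0 < x" unfolding x_def by simp
  have "real n * real N * (1 - real K / real n) / x = real N * (real n - real K) / x"
    using assms(2) x by (simp add: field_simps)
  then have "real k \<le> real n - real N * (real n - real K) / x"
    using rate unfolding x_def by linarith
  then have "real k * x \<le> real n * x - real N * (real n - real K)"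
    using x by (simp add: field_simps)
  moreover have "real N * (real n - real j + 1) \<le> real N * (real n - real K)"
    using assms(3) by (intro mult_left_mono) auto
  ultimately have "real N * (real n - real j + 1) \<le> (real n - real k) * (real T + 1)"
    unfolding x_def by (simp add: algebra_simps)
  then have "real N * (real k - real j + 1) \<le> (real n - real k) * (real T + 1 - real N)"
    by (simp add: algebra_simps)
  then have "real_of_int (int N * (int k - int j + 1)) \<le> real_of_int (int (n - k) * (int T + 1 - int N))"
    using assms(1) by (simp add: of_nat_diff)
  then show ?thesis by linarith
qed

theorem corollary1:
  fixes N n k L :: nat and Tg kcon :: "nat \<Rightarrow> nat"
  assumes "N \<ge> 1" and "k \<le> n"
    and "\<And>i j. 1 \<le> i \<Longrightarrow> i < j \<Longrightarrow> j \<le> L \<Longrightarrow> Tg j < Tg i"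
    and "\<And>j. j \<in> {1..L} \<Longrightarrow>
           real k \<le> real n - real n * real N *
             (1 - (\<Sum>l\<in>{1..<j}. real (kcon l) / real n)) / (real (Tg j) + 1)"
    and "k \<le> (\<Sum>l\<in>{1..L}. kcon l)"
  shows "\<exists>(R :: nat ring) (T :: nat \<Rightarrow> nat) enc dec.
           field R \<and> finite (carrier R) \<and>
           is_p2p_code (carrier R) n k T enc dec \<and>
           achieves_spectrum (carrier R) n k T N enc dec \<and>
           (\<forall>j\<in>{1..k}. T j \<in> Tg ` {1..L}) \<and>
           (\<forall>l\<in>{1..L}. card {j\<in>{1..k}. T j = Tg l} \<le> kcon l)"
proof -
  define T where "T j = Tg (block_of kcon j)" for j
  note block = block_of_bounds[OF _ order_trans[OF _ assms(5)]]
  have "int N * (int k - int j + 1) \<le> int (n - k) * (int (T j) + 1 - int N)" if "j \<in> {1..k}" for j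
    using that block[of j] assms(2) assms(4)[of "block_of kcon j"] unfolding T_def
    by (intro delay_condition_of_rate_bound) (auto simp: sum_divide_distrib)
  then obtain R :: "nat ring" and enc dec where code: "field R" "finite (carrier R)"
      "is_p2p_code (carrier R) n k T enc dec" "achieves_spectrum (carrier R) n k T N enc dec"
    using delay_spectrum_achievable[OF assms(1)] by blast
  have "inj_on Tg {1..L}"
    by (rule inj_onI) (metis assms(3) atLeastAtMost_iff linorder_neq_iff less_irrefl)
  then have "{j \<in> {1..k}. T j = Tg l} = {j \<in> {1..k}. block_of kcon j = l}" if "l \<in> {1..L}" for l
    using that block unfolding T_def by (auto dest: inj_onD)
  then have "\<forall>l\<in>{1..L}. card {j \<in> {1..k}. T j = Tg l} \<le> kcon l"
    using card_block_of_le[OF assms(5)] by simp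
  moreover have "\<forall>j\<in>{1..k}. T j \<in> Tg ` {1..L}"
    using block unfolding T_def by auto
  ultimately show ?thesis using code by blast
qed

end
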